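(* There is an absolute constant $c$ such that for every perfect square $n=\ell^2$, the tilted grid sequence $S\in[n]^n$ satisfies $\mathrm{OPT}(S)\le c\,n$.
   Context: Tilted grid sequence: let $\ell=\sqrt n$ and consider the $n$ points $\{(i\ell+(j-1),\ j\ell+i-1): i,j\in[\ell]\}$; no two share an $x$- or $y$-coordinate. $S$ is the permutation obtained by listing the points in increasing order of $y$-coordinate (time) and replacing each point's $x$-coordinate (key) by its rank among all $x$-coordinates. Dynamic BST model: an algorithm chooses an initial BST on $[n]$. To serve each access it touches a connected set of nodes containing the root and the accessed key, may rearrange them into any BST shape, and pays the number of touched nodes. $\mathrm{OPT}(S)$ is the minimum total cost over all offline algorithms. *)

theory Defs
  imports Complex_Main "HOL-Library.Tree"
begin

text \<open>The n = l^2 points (i*l + (j-1), j*l + i - 1), i,j in [l]; first component is the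
  x-coordinate (key), second the y-coordinate (time).\<close>
definition tilted_points :: "nat \<Rightarrow> (nat \<times> nat) list" where
  "tilted_points l = [(i*l + (j-1), j*l + i - 1). i \<leftarrow> [1..<l+1], j \<leftarrow> [1..<l+1]]"

definition x_rank :: "nat \<Rightarrow> nat \<Rightarrow> nat" where
  "x_rank l x = card {x' \<in> fst ` set (tilted_points l). x' \<le> x}"

definition tilted_seq :: "nat \<Rightarrow> nat list" where
  "tilted_seq l = map (\<lambda>p. x_rank l (fst p)) (sort_key snd (tilted_points l))"

text \<open>Maximal subtrees hanging off a set T of touched nodes (recursion goes through
  T-nodes and stops at the first node not in T; empty subtrees are omitted).\<close>
fun hang :: "'a set \<Rightarrow> 'a tree \<Rightarrow> 'a tree set" where
  "hang T Leaf = {}"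
| "hang T (Node l a r) = (if a \<in> T then hang T l \<union> hang T r else {Node l a r})"

text \<open>T is a nonempty connected set of nodes containing the root.\<close>
definition is_top :: "'a set \<Rightarrow> 'a tree \<Rightarrow> bool" where
  "is_top T t \<longleftrightarrow> T \<noteq> {} \<and> T \<subseteq> set_tree t \<and> T \<inter> \<Union> (set_tree ` hang T t) = {}"

text \<open>Serving access x in tree t by touching T and rearranging T into any BST shape,
  producing t'. The untouched subtrees hanging off T are kept.\<close>
definition bst_step :: "nat tree \<Rightarrow> nat \<Rightarrow> nat set \<Rightarrow> nat tree \<Rightarrow> bool" where
  "bst_step t x T t' \<longleftrightarrow> x \<in> T \<and> is_top T t \<and> is_top T t' \<and> hang T t' = hang T t
     \<and> inorder t' = inorder t"

text \<open>An execution serving S on keys [n] = {1..n}: trees ts (ts!0 the initial BST),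
  touched sets Ts; its cost is the total number of touched nodes.\<close>
definition bst_execution :: "nat \<Rightarrow> nat list \<Rightarrow> nat tree list \<Rightarrow> nat set list \<Rightarrow> bool" where
  "bst_execution n S ts Ts \<longleftrightarrow> length ts = length S + 1 \<and> length Ts = length S
     \<and> inorder (ts ! 0) = [1..<n+1]
     \<and> (\<forall>i < length S. bst_step (ts ! i) (S ! i) (Ts ! i) (ts ! Suc i))"

definition exec_cost :: "nat set list \<Rightarrow> nat" where
  "exec_cost Ts = sum_list (map card Ts)"

definition OPT :: "nat \<Rightarrow> nat list \<Rightarrow> nat" where
  "OPT n S = (LEAST c. \<exists>ts Ts. bst_execution n S ts Ts \<and> exec_cost Ts = c)"

end

theory Submission
  imports Defs
begin

text \<open>
  The keys are the cells of an \<open>l \<times> l\<close> grid: key \<open>i*l + j\<close> lies in row \<open>i < l\<close> and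
  column \<open>1 \<le> j \<le> l\<close>, and the tilted grid sequence accesses the grid column by column,
  each column from the top row to the bottom row.

  While column \<open>j\<close> is served, the current key sits at the root. Its right subtree is a
  right spine through the remaining keys of column \<open>j\<close>, each carrying as left subtree the
  gap of keys between it and its predecessor in the column. Its left subtree holds the
  keys served so far, already rearranged into a left spine through the corresponding keys
  of column \<open>j + 1\<close>. Moving down one row only rearranges six nodes near the root, and
  at the end of a column the left spine of column \<open>j + 1\<close> is turned into a right spine
  by touching its \<open>l\<close> keys. The first and last columns are served from a fixed tree,
  touching the column's spine down to the accessed row. Altogether this costs
  \<open>O(l\<^sup>2) = O(n)\<close>.
\<close>

section \<open>The tilted grid sequence in closed form\<close>

lemma set_tilted_points: "set (tilted_points l) = {(i*l + (j-1), j*l+i-1) | i j. 1 \<le> i \<and> i \<le> l \<and> 1 \<le> j \<and> j \<le> l}"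
proof (intro equalityI subsetI)
  fix p assume "p \<in> set (tilted_points l)"
  then obtain i j where "i \<in> {1..<l+1}" "j \<in> {1..<l+1}" "p = (i*l + (j-1), j*l+i-1)"
    unfolding tilted_points_def by (simp only: set_concat set_map set_upt image_image) blast
  then show "p \<in> {(i*l + (j-1), j*l+i-1) | i j. 1 \<le> i \<and> i \<le> l \<and> 1 \<le> j \<and> j \<le> l}"
    by (intro CollectI exI[of _ i] exI[of _ j]) auto
next
  fix p assume "p \<in> {(i*l + (j-1), j*l+i-1) | i j. 1 \<le> i \<and> i \<le> l \<and> 1 \<le> j \<and> j \<le> l}"
  then obtain i j where "1 \<le> i" "i \<le> l" "1 \<le> j" "j \<le> l" "p = (i*l + (j-1), j*l+i-1)" by blast
  then have "i \<in> {1..<l+1}" "j \<in> {1..<l+1}" "p = (i*l + (j-1), j*l+i-1)" by auto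
  then show "p \<in> set (tilted_points l)" unfolding tilted_points_def by (simp only: set_concat set_map set_upt image_image) blast
qed

lemma length_tilted_points: "length (tilted_points l) = l*l"
  unfolding tilted_points_def by (simp add: length_concat comp_def sum_list_triv)

text \<open>The point with \<open>y\<close>-coordinate \<open>l + k\<close> is the one with \<open>i - 1 = k mod l\<close> and \<open>j - 1 = k div l\<close>.\<close>
definition time_sorted_points :: "nat \<Rightarrow> (nat \<times> nat) list" where
  "time_sorted_points l = map (\<lambda>k. ((k mod l + 1)*l + k div l, l + k)) [0..<l*l]"

lemma set_time_sorted_points: "set (time_sorted_points l) = set (tilted_points l)"
proof -
  have "set (time_sorted_points l) = {((k mod l + 1)*l + k div l, l + k) | k. k < l*l}"
    unfolding time_sorted_points_def by auto
  also have "\<dots> = {(i*l + (j-1), j*l+i-1) | i j. 1 \<le> i \<and> i \<le> l \<and> 1 \<le> j \<and> j \<le> l}"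
  proof (intro equalityI subsetI)
    fix p assume "p \<in> {((k mod l + 1)*l + k div l, l + k) | k. k < l*l}"
    then obtain k where k: "k < l*l" "p = ((k mod l + 1)*l + k div l, l + k)" by auto
    have l0: "l > 0" using k by (cases l) auto
    have d: "k div l < l" using k by (simp add: less_mult_imp_div_less)
    have m: "k mod l < l" using l0 by simp
    have e: "l + k = (k div l + 1) * l + (k mod l + 1) - 1"
      using div_mult_mod_eq[of k l] by (simp add: algebra_simps)
    show "p \<in> {(i*l + (j-1), j*l+i-1) | i j. 1 \<le> i \<and> i \<le> l \<and> 1 \<le> j \<and> j \<le> l}"
      apply (rule CollectI, rule exI[of _ "k mod l + 1"], rule exI[of _ "k div l + 1"])
      using k d m e by (simp add: Suc_leI)
  next
    fix p assume "p \<in> {(i*l + (j-1), j*l+i-1) | i j. 1 \<le> i \<and> i \<le> l \<and> 1 \<le> j \<and> j \<le> l}"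
    then obtain i j where ij: "1 \<le> i" "i \<le> l" "1 \<le> j" "j \<le> l" "p = (i*l + (j-1), j*l+i-1)" by auto
    define k where "k = (j-1)*l + (i-1)"
    obtain i' j' where ij': "i = Suc i'" "j = Suc j'" using ij by (cases i; cases j) auto
    have km: "k mod l = i - 1" "k div l = j - 1" using ij unfolding k_def ij' by auto
    have kl: "k < l*l"
    proof -
      have "(j-1)*l \<le> (l-1)*l" using ij by simp
      then show ?thesis unfolding k_def using ij by (cases l) (auto simp: algebra_simps)
    qed
    show "p \<in> {((k mod l + 1)*l + k div l, l + k) | k. k < l*l}"
      apply (rule CollectI, rule exI[of _ k])
      using ij km kl unfolding ij' by (auto simp: k_def algebra_simps)
  qed
  finally show ?thesis by (simp add: set_tilted_points)
qed

lemma inj_on_snd_time_sorted_points: "inj_on snd (set (time_sorted_points l))"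
  unfolding time_sorted_points_def by (auto simp: inj_on_def)

lemma sort_tilted_points: "sort_key snd (tilted_points l) = time_sorted_points l"
proof -
  have dP: "distinct (time_sorted_points l)" unfolding time_sorted_points_def by (auto simp: distinct_map inj_on_def)
  have "card (set (tilted_points l)) = length (tilted_points l)"
    using set_time_sorted_points[of l] distinct_card[OF dP] by (simp add: length_tilted_points time_sorted_points_def)
  hence dt: "distinct (tilted_points l)" by (simp add: card_distinct)
  show ?thesis
    apply (rule map_sorted_distinct_set_unique[where f=snd])
    subgoal using inj_on_snd_time_sorted_points[of l] set_time_sorted_points[of l] by simp
    subgoal by (rule sorted_sort_key)
    subgoal using inj_on_snd_time_sorted_points[of l] set_time_sorted_points[of l] dt by (simp add: distinct_map)
    subgoal unfolding time_sorted_points_def by (simp add: sorted_iff_nth_mono)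
    subgoal unfolding time_sorted_points_def by (simp add: distinct_map inj_on_def)
    subgoal using set_time_sorted_points[of l] by simp
    done
qed

lemma transposed_index_less: assumes "(k::nat) < l*l" shows "k mod l * l + k div l < l * l"
proof -
  have l0: "l > 0" using assms by (cases l) auto
  have d: "k div l < l" using assms by (simp add: less_mult_imp_div_less)
  have "k mod l \<le> l - 1" using l0 by (simp add: less_Suc_eq_le[symmetric])
  hence "k mod l * l \<le> (l-1)*l" by simp
  also have "(l-1)*l = l*l - l" by (simp add: algebra_simps)
  finally show ?thesis using d l0 by (cases l) auto
qed

lemma fst_tilted_points: "fst ` set (tilted_points l) = {l..<l*l+l}"
proof -
  have "fst ` set (tilted_points l) = fst ` set (time_sorted_points l)" by (simp add: set_time_sorted_points)
  also have "\<dots> = (\<lambda>k. (k mod l + 1)*l + k div l) ` {..<l*l}"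
    unfolding time_sorted_points_def by (auto simp: image_image)
  also have "\<dots> = {l..<l*l+l}"
  proof (intro equalityI subsetI)
    fix x assume "x \<in> (\<lambda>k. (k mod l + 1)*l + k div l) ` {..<l*l}"
    then obtain k where k: "k < l*l" "x = (k mod l + 1)*l + k div l" by auto
    show "x \<in> {l..<l*l+l}" using transposed_index_less[OF k(1)] k by (simp add: algebra_simps)
  next
    fix x assume x: "x \<in> {l..<l*l+l}"
    define y where "y = x - l"
    have y: "y < l*l" "x = y + l" using x by (auto simp: y_def)
    have l0: "l > 0" using y by (cases l) auto
    define k where "k = y mod l * l + y div l"
    have yd: "y div l < l" using y by (simp add: less_mult_imp_div_less)
    have km: "k mod l = y div l" "k div l = y mod l" using yd l0 by (auto simp: k_def)
    have "k < l*l" unfolding k_def by (rule transposed_index_less[OF y(1), simplified km])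
    moreover have "x = (k mod l + 1)*l + k div l"
      using km y div_mult_mod_eq[of y l] by (simp add: algebra_simps)
    ultimately show "x \<in> (\<lambda>k. (k mod l + 1)*l + k div l) ` {..<l*l}" by auto
  qed
  finally show ?thesis .
qed

lemma x_rank_eq: assumes "l \<le> x" "x < l*l+l" shows "x_rank l x = x + 1 - l"
proof -
  have "{x' \<in> fst ` set (tilted_points l). x' \<le> x} = {l..x}" using assms by (auto simp: fst_tilted_points)
  thus ?thesis unfolding x_rank_def by simp
qed

lemma tilted_seq_eq: "tilted_seq l = map (\<lambda>k. k mod l * l + k div l + 1) [0..<l*l]"
proof -
  have "tilted_seq l = map (\<lambda>p. x_rank l (fst p)) (time_sorted_points l)" unfolding tilted_seq_def sort_tilted_points ..
  also have "\<dots> = map (\<lambda>k. k mod l * l + k div l + 1) [0..<l*l]"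
    unfolding time_sorted_points_def map_map comp_def
  proof (rule map_cong[OF refl])
    fix k assume "k \<in> set [0..<l*l]"
    hence k: "k < l*l" by simp
    then show "x_rank l (fst ((k mod l + 1)*l + k div l, l + k)) = k mod l * l + k div l + 1"
      using transposed_index_less[OF k] by (simp add: x_rank_eq algebra_simps)
  qed
  finally show ?thesis .
qed

fun top_set :: "'a set \<Rightarrow> 'a tree \<Rightarrow> bool" where
  "top_set T Leaf = True"
| "top_set T (Node l a r) = (if a \<in> T then top_set T l \<and> top_set T r else set_tree (Node l a r) \<inter> T = {})"

lemma top_set_iff_hang: "(T \<inter> \<Union> (set_tree ` hang T t) = {}) = top_set T t"
  by (induction t) auto

lemma is_top_iff_top_set: "is_top T t \<longleftrightarrow> T \<noteq> {} \<and> T \<subseteq> set_tree t \<and> top_set T t"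
  unfolding is_top_def top_set_iff_hang ..

lemma top_set_if_disjoint: "set_tree t \<inter> T = {} \<Longrightarrow> top_set T t"
  by (cases t) auto

lemma hang_if_disjoint: "set_tree t \<inter> T = {} \<Longrightarrow> hang T t = (if t = Leaf then {} else {t})"
  by (cases t) auto

lemma bst_stepI:
  assumes "x \<in> T" "T \<subseteq> set_tree t" "T \<subseteq> set_tree t'" "top_set T t" "top_set T t'"
    "hang T t' = hang T t" "inorder t' = inorder t"
  shows "bst_step t x T t'"
  using assms unfolding bst_step_def is_top_iff_top_set by auto

lemma bst_step_refl:
  assumes "x \<in> T" "T \<subseteq> set_tree t" "top_set T t"
  shows "bst_step t x T t"
  using assms unfolding bst_step_def is_top_iff_top_set by auto

lemma bst_step_five_nodes:
  assumes T: "T = {k1,k2,k3,k4,k5}" and x: "x \<in> T"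
   and d: "set_tree LA \<inter> T = {}" "set_tree R1 \<inter> T = {}" "set_tree L1 \<inter> T = {}" "set_tree RR \<inter> T = {}"
  shows "bst_step (Node (Node Leaf k1 LA) k2 (Node (Node (Node Leaf k3 R1) k4 L1) k5 RR)) x T
                  (Node (Node (Node Leaf k1 (Node LA k2 Leaf)) k3 (Node R1 k4 L1)) k5 RR)"
  apply (rule bst_stepI)
  using x d by (auto simp: T top_set_if_disjoint hang_if_disjoint)

lemma bst_step_six_nodes:
  assumes T: "T = {k1,k2,k3,k4,k5,k6}" and x: "x \<in> T"
   and d: "set_tree A \<inter> T = {}" "set_tree RA \<inter> T = {}" "set_tree LA \<inter> T = {}"
     "set_tree R1 \<inter> T = {}" "set_tree L1 \<inter> T = {}" "set_tree RR \<inter> T = {}"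
  shows "bst_step (Node (Node A k1 (Node RA k2 LA)) k3 (Node (Node (Node Leaf k4 R1) k5 L1) k6 RR)) x T
                  (Node (Node (Node A k1 (Node RA k2 (Node LA k3 Leaf))) k4 (Node R1 k5 L1)) k6 RR)"
  apply (rule bst_stepI)
  using x d by (auto simp: T top_set_if_disjoint hang_if_disjoint)

section \<open>The trees of the execution\<close>

fun rpath :: "nat \<Rightarrow> nat \<Rightarrow> nat tree" where
  "rpath a 0 = Leaf" | "rpath a (Suc k) = Node Leaf a (rpath (Suc a) k)"

fun lpath :: "nat \<Rightarrow> nat \<Rightarrow> nat tree" where
  "lpath a 0 = Leaf" | "lpath a (Suc k) = Node (lpath a k) (a+k) Leaf"

text \<open>The keys strictly between the column-\<open>j\<close> keys of rows \<open>q - 1\<close> and \<open>q\<close> (all keys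
  below \<open>j\<close> if \<open>q = 0\<close>), rooted at the first key \<open>q*l+1\<close> of row \<open>q\<close>.\<close>
definition gap :: "nat \<Rightarrow> nat \<Rightarrow> nat \<Rightarrow> nat tree" where
  "gap l j q = Node (rpath (q*l+j+1-l) (if q=0 then 0 else l-j)) (q*l+1) (lpath (q*l+2) (j-2))"

function spine :: "nat \<Rightarrow> nat \<Rightarrow> nat \<Rightarrow> nat tree" where
  "spine l j q = (if q < l then Node (gap l j q) (q*l+j) (spine l j (Suc q)) else rpath (l*l+j+1-l) (l-j))"
  by pat_completeness auto
termination by (relation "measure (\<lambda>(l,j,q). l - q)") auto
declare spine.simps[simp del]

text \<open>The gap of column \<open>j + 1\<close> in row \<open>i\<close> without its largest key \<open>i*l+j\<close>.\<close>
definition cut_gap :: "nat \<Rightarrow> nat \<Rightarrow> nat \<Rightarrow> nat tree" where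
  "cut_gap l j i = Node (rpath (i*l+j+2-l) (l-j-1)) (i*l+1) (lpath (i*l+2) (j-2))"

fun next_spine :: "nat \<Rightarrow> nat \<Rightarrow> nat \<Rightarrow> nat tree" where
  "next_spine l j 0 = gap l (Suc j) 0"
| "next_spine l j (Suc q) = Node (next_spine l j q) (q*l+j+1) (gap l (Suc j) (Suc q))"

fun done_part :: "nat \<Rightarrow> nat \<Rightarrow> nat \<Rightarrow> nat tree" where
  "done_part l j 0 = gap l j 0"
| "done_part l j (Suc i) = Node (next_spine l j i) (i*l+j+1) (cut_gap l j (Suc i))"

text \<open>The tree just before key \<open>i*l+j\<close> is accessed; \<open>next_spine\<close> holds the keys served
  earlier in column \<open>j\<close>, arranged for column \<open>j + 1\<close>.\<close>
definition grid_tree :: "nat \<Rightarrow> nat \<Rightarrow> nat \<Rightarrow> nat tree" where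
  "grid_tree l j i = Node (done_part l j i) (i*l+j) (spine l j (Suc i))"

lemma spine_less: "q < l \<Longrightarrow> spine l j q = Node (gap l j q) (q*l+j) (spine l j (Suc q))"
  by (simp add: spine.simps)

lemma spine_end: "\<not> q < l \<Longrightarrow> spine l j q = rpath (l*l+j+1-l) (l-j)"
  by (simp add: spine.simps)

lemma inorder_rpath: "inorder (rpath a k) = [a..<a+k]"
  by (induction k arbitrary: a) (auto simp: upt_conv_Cons)

lemma inorder_lpath: "inorder (lpath a k) = [a..<a+k]"
  by (induction k) auto

lemma less_imp_mult_add_le: "(k'::nat) < k \<Longrightarrow> k'*l + l \<le> k*l"
proof -
  assume "k' < k" hence "Suc k' * l \<le> k * l" by (intro mult_le_mono1) simp
  thus ?thesis by simp
qed

lemma upt_append_Cons: "a \<le> b \<Longrightarrow> b < c \<Longrightarrow> b' = Suc b \<Longrightarrow> [a..<b] @ b # [b'..<c] = [a..<c]"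
  by (metis upt_add_eq_append le_add_diff_inverse upt_conv_Cons less_imp_le)

lemma inorder_gap: assumes "2 \<le> j" "j \<le> l"
  shows "inorder (gap l j q) = [(if q = 0 then 1 else q*l+j+1-l)..<q*l+j]"
proof (cases "q = 0")
  case True
  have "2 + (j-2) = j" using assms by simp
  then show ?thesis using True assms by (simp add: gap_def inorder_rpath inorder_lpath upt_rec)
next
  case False
  have "l \<le> q*l" using False by simp
  then have e: "q*l+j+1-l + (l-j) = q*l+1" using assms by arith
  have e2: "q*l+2+(j-2) = q*l+j" using assms by simp
  have "inorder (gap l j q) = [q*l+j+1-l..<q*l+1] @ (q*l+1) # [q*l+2..<q*l+j]"
    using False unfolding gap_def by (simp only: inorder.simps inorder_rpath inorder_lpath e e2 if_False
       append_Nil append_Cons append_assoc)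
  also have "\<dots> = [q*l+j+1-l..<q*l+j]"
    by (rule upt_append_Cons) (use assms \<open>l \<le> q*l\<close> in arith)+
  finally show ?thesis using False by simp
qed

lemma inorder_spine: assumes "2 \<le> j" "j \<le> l" "1 \<le> q" "q \<le> l"
  shows "inorder (spine l j q) = [q*l+j+1-l..<l*l+1]"
  using assms
proof (induction "l - q" arbitrary: q)
  case 0
  then have q: "q = l" by simp
  have "l \<le> l*l" using 0 by simp
  then have e: "l*l+j+1-l + (l-j) = l*l+1" using 0 by arith
  have "spine l j q = rpath (l*l+j+1-l) (l-j)" using q by (simp add: spine_end)
  then have "inorder (spine l j q) = [l*l+j+1-l..<l*l+j+1-l+(l-j)]" by (simp only: inorder_rpath)
  then show ?case using q by (simp only: e)
next
  case (Suc d)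
  then have ql: "q < l" by simp
  have "q*l + l \<le> l*l" using less_imp_mult_add_le[OF ql] .
  have "inorder (spine l j q) = [q*l+j+1-l..<q*l+j] @ (q*l+j) # [Suc q*l+j+1-l..<l*l+1]"
    using Suc.hyps(1)[of "Suc q"] Suc.hyps(2) Suc.prems ql
    by (simp add: spine_less[OF ql] inorder_gap del: upt_Suc)
  also have "\<dots> = [q*l+j+1-l..<l*l+1]"
    apply (rule upt_append_Cons)
    subgoal using Suc.prems by arith
    subgoal using Suc.prems \<open>q*l + l \<le> l*l\<close> by arith
    subgoal by simp
    done
  finally show ?case .
qed

lemma inorder_cut_gap: assumes "2 \<le> j" "j < l" "1 \<le> i"
  shows "inorder (cut_gap l j i) = [i*l+j+2-l..<i*l+j]"
proof -
  have "l \<le> i*l" using assms by simp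
  then have e: "i*l+j+2-l + (l-j-1) = i*l+1" using assms by arith
  have e2: "i*l+2+(j-2) = i*l+j" using assms by simp
  have "inorder (cut_gap l j i) = [i*l+j+2-l..<i*l+1] @ (i*l+1) # [i*l+2..<i*l+j]"
    unfolding cut_gap_def by (simp only: inorder.simps inorder_rpath inorder_lpath e e2
       append_Nil append_Cons append_assoc)
  also have "\<dots> = [i*l+j+2-l..<i*l+j]"
    by (rule upt_append_Cons) (use assms \<open>l \<le> i*l\<close> in arith)+
  finally show ?thesis .
qed

lemma inorder_next_spine: assumes "2 \<le> j" "j < l"
  shows "inorder (next_spine l j q) = [1..<q*l+j+1]"
proof (induction q)
  case 0
  then show ?case using assms by (simp add: inorder_gap)
next
  case (Suc q)
  have "inorder (next_spine l j (Suc q)) = [1..<q*l+j+1] @ (q*l+j+1) # [Suc (q*l+j+1)..<Suc q*l+Suc j]"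
    using Suc assms by (simp add: inorder_gap del: upt_Suc)
  also have "\<dots> = [1..<Suc q*l+j+1]" using assms by (subst upt_append_Cons) auto
  finally show ?case .
qed

lemma inorder_done_part: assumes "2 \<le> j" "j < l"
  shows "inorder (done_part l j i) = [1..<i*l+j]"
proof (cases i)
  case 0
  then show ?thesis using assms by (simp add: inorder_gap)
next
  case (Suc i')
  have "inorder (done_part l j i) = [1..<i'*l+j+1] @ (i'*l+j+1) # [Suc (i'*l+j+1)..<i*l+j]"
    using Suc assms by (simp add: inorder_next_spine inorder_cut_gap del: upt_Suc)
  also have "\<dots> = [1..<i*l+j]" using assms Suc by (subst upt_append_Cons) auto
  finally show ?thesis .
qed

lemma inorder_grid_tree: assumes "2 \<le> j" "j < l" "i < l"
  shows "inorder (grid_tree l j i) = [1..<l*l+1]"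
proof -
  have "i*l + l \<le> l*l" using less_imp_mult_add_le[OF assms(3)] .
  have "inorder (grid_tree l j i) = [1..<i*l+j] @ (i*l+j) # [Suc (i*l+j)..<l*l+1]"
    unfolding grid_tree_def using assms by (simp add: inorder_done_part inorder_spine del: upt_Suc)
  also have "\<dots> = [1..<l*l+1]" using assms \<open>i*l + l \<le> l*l\<close> by (subst upt_append_Cons) auto
  finally show ?thesis .
qed

lemma inorder_grid_tree_0: assumes "2 \<le> j" "j \<le> l"
  shows "inorder (grid_tree l j 0) = [1..<l*l+1]"
proof -
  have "l \<le> l*l" using assms by simp
  have "inorder (grid_tree l j 0) = [1..<j] @ j # [Suc j..<l*l+1]"
    unfolding grid_tree_def using assms by (simp add: inorder_gap inorder_spine del: upt_Suc)
  also have "\<dots> = [1..<l*l+1]" by (rule upt_append_Cons) (use assms \<open>l \<le> l*l\<close> in linarith)+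
  finally show ?thesis .
qed

lemma set_rpath: "set_tree (rpath a k) = {a..<a+k}"
  by (simp flip: set_inorder add: inorder_rpath)

lemma set_lpath: "set_tree (lpath a k) = {a..<a+k}"
  by (simp flip: set_inorder add: inorder_lpath)

lemma set_gap: "2 \<le> j \<Longrightarrow> j \<le> l \<Longrightarrow> set_tree (gap l j k) \<subseteq> {k*l+j+1-l..<k*l+j}"
  by (auto simp flip: set_inorder simp add: inorder_gap split: if_splits)

lemma set_spine: assumes "2 \<le> j" "j \<le> l" "1 \<le> q" "q \<le> l"
  shows "set_tree (spine l j q) = {q*l+j+1-l..<l*l+1}"
  unfolding set_inorder[symmetric] inorder_spine[OF assms] set_upt ..

lemma set_next_spine: assumes "2 \<le> j" "j < l" shows "set_tree (next_spine l j q) = {1..<q*l+j+1}"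
  unfolding set_inorder[symmetric] inorder_next_spine[OF assms] set_upt ..

lemma set_grid_tree: assumes "2 \<le> j" "j < l" "i < l" shows "set_tree (grid_tree l j i) = {1..<l*l+1}"
  unfolding set_inorder[symmetric] inorder_grid_tree[OF assms] set_upt ..

lemma set_grid_tree_0: assumes "2 \<le> j" "j \<le> l" shows "set_tree (grid_tree l j 0) = {1..<l*l+1}"
  unfolding set_inorder[symmetric] inorder_grid_tree_0[OF assms] set_upt ..

lemma gap_neq_Leaf: "gap l j k \<noteq> Leaf" by (simp add: gap_def)

lemma spine_top_set_hang:
  assumes "q \<le> p" "p < l" "\<forall>k. q \<le> k \<and> k \<le> p \<longrightarrow> k*l+j \<in> T"
    "\<forall>k. q \<le> k \<and> k < p \<longrightarrow> set_tree (gap l j k) \<inter> T = {}"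
  shows "top_set T (spine l j q) = (top_set T (gap l j p) \<and> top_set T (spine l j (Suc p))) \<and>
         hang T (spine l j q) = (gap l j ` {q..<p}) \<union> hang T (gap l j p) \<union> hang T (spine l j (Suc p))"
  using assms
proof (induction "p - q" arbitrary: q)
  case 0
  then have "q = p" by simp
  then show ?case using 0 by (simp add: spine_less)
next
  case (Suc d)
  then have qp: "q < p" "q < l" by auto
  have IH: "top_set T (spine l j (Suc q)) = (top_set T (gap l j p) \<and> top_set T (spine l j (Suc p))) \<and>
         hang T (spine l j (Suc q)) = (gap l j ` {Suc q..<p}) \<union> hang T (gap l j p) \<union> hang T (spine l j (Suc p))"
    using Suc by (intro Suc.hyps) auto
  have d: "set_tree (gap l j q) \<inter> T = {}" using Suc.prems qp by auto
  have r: "q*l+j \<in> T" using Suc.prems qp by auto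
  have s: "{q..<p} = insert q {Suc q..<p}" using qp by auto
  show ?case using IH r top_set_if_disjoint[OF d] hang_if_disjoint[OF d] gap_neq_Leaf[of l j q]
    by (simp add: spine_less[OF qp(2)] s)
qed

lemma next_spine_top_set_hang:
  assumes "\<forall>k. k < q \<longrightarrow> k*l+j+1 \<in> T" "\<forall>k. k \<le> q \<longrightarrow> set_tree (gap l (Suc j) k) \<inter> T = {}"
  shows "top_set T (next_spine l j q) \<and> hang T (next_spine l j q) = gap l (Suc j) ` {..q}"
  using assms
proof (induction q)
  case 0
  then have d: "set_tree (gap l (Suc j) 0) \<inter> T = {}" by auto
  show ?case using top_set_if_disjoint[OF d] hang_if_disjoint[OF d] gap_neq_Leaf[of l "Suc j" 0] by simp
next
  case (Suc q)
  have d: "set_tree (gap l (Suc j) (Suc q)) \<inter> T = {}" using Suc.prems by auto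
  have s: "{..Suc q} = insert (Suc q) {..q}" by auto
  show ?case using Suc top_set_if_disjoint[OF d] hang_if_disjoint[OF d] gap_neq_Leaf[of l "Suc j" "Suc q"]
    by (simp add: s)
qed

section \<open>Moving down one row of a middle column\<close>

lemma rpath_pos: "0 < k \<Longrightarrow> rpath a k = Node Leaf a (rpath (Suc a) (k-1))"
  by (cases k) auto

lemma lpath_extend: "2 \<le> j \<Longrightarrow> lpath a (j-1) = Node (lpath a (j-2)) (a+j-2) Leaf"
  by (metis Suc_diff_le diff_Suc_1 diff_diff_left add_diff_assoc lpath.simps(2) one_add_one)

text \<open>For \<open>i = 0\<close> the truncated subtraction makes \<open>(i-1)*l+j+1\<close> coincide with \<open>i*l+j+1\<close>.\<close>
definition row_touched :: "nat \<Rightarrow> nat \<Rightarrow> nat \<Rightarrow> nat set" where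
  "row_touched l j i = {(i-1)*l+j+1, i*l+1, i*l+j, i*l+j+1, Suc i*l+1, Suc i*l+j}"

lemma gap_0: "gap l j 0 = Node Leaf 1 (lpath 2 (j-2))"
  by (simp only: gap_def mult_0 add_0 simp_thms(6) if_True rpath.simps(1))

lemma grid_tree_0_unfold:
  assumes j: "2 \<le> j" "j < l"
  shows "grid_tree l j 0 = Node (Node Leaf 1 (lpath 2 (j-2))) j
           (Node (Node (Node Leaf (j+1) (rpath (Suc (j+1)) (l-j-1))) (l+1) (lpath (l+2) (j-2))) (l+j) (spine l j 2))"
proof -
  have "spine l j (Suc 0) = Node (gap l j 1) (l+j) (spine l j 2)"
    using spine_less[of 1 l j] j by (simp add: numeral_2_eq_2)
  moreover have "gap l j 1 = Node (Node Leaf (j+1) (rpath (Suc (j+1)) (l-j-1))) (l+1) (lpath (l+2) (j-2))"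
    using j by (simp add: gap_def rpath_pos)
  ultimately show ?thesis unfolding grid_tree_def done_part.simps gap_0 by simp
qed

lemma grid_tree_1_unfold:
  assumes j: "2 \<le> j" "j < l"
  shows "grid_tree l j 1 = Node (Node (Node Leaf 1 (Node (lpath 2 (j-2)) j Leaf)) (j+1)
           (Node (rpath (Suc (j+1)) (l-j-1)) (l+1) (lpath (l+2) (j-2)))) (l+j) (spine l j 2)"
proof -
  have "gap l (Suc j) 0 = Node Leaf 1 (Node (lpath 2 (j-2)) j Leaf)"
    using lpath_extend[of j 2] j by (simp only: gap_0) simp
  moreover have "cut_gap l j 1 = Node (rpath (Suc (j+1)) (l-j-1)) (l+1) (lpath (l+2) (j-2))"
    using j by (simp add: cut_gap_def)
  ultimately show ?thesis
    unfolding grid_tree_def One_nat_def done_part.simps next_spine.simps by (simp add: numeral_2_eq_2)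
qed

lemma grid_tree_Suc_unfold:
  assumes j: "2 \<le> j" "j < l" and i: "i = Suc i'" "Suc i < l"
  shows "grid_tree l j i = Node (Node (next_spine l j i') (i'*l+j+1) (Node (rpath (i*l+j+2-l) (l-j-1)) (i*l+1) (lpath (i*l+2) (j-2))))
           (i*l+j) (Node (Node (Node Leaf (i*l+j+1) (rpath (Suc (i*l+j+1)) (l-j-1))) (Suc i*l+1) (lpath (Suc i*l+2) (j-2)))
             (Suc i*l+j) (spine l j (Suc (Suc i))))"
proof -
  have "Suc i*l+j+1-l = i*l+j+1" by simp
  moreover have "rpath (i*l+j+1) (l-j) = Node Leaf (i*l+j+1) (rpath (Suc (i*l+j+1)) (l-j-1))"
    using j by (simp add: rpath_pos)
  ultimately show ?thesis
    unfolding grid_tree_def i(1) done_part.simps cut_gap_def spine_less[OF i(2)[unfolded i(1)]] gap_def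
    by (simp only: i(1) if_False nat.distinct)
qed

lemma grid_tree_Suc_Suc_unfold:
  assumes j: "2 \<le> j" and i: "i = Suc i'"
  shows "grid_tree l j (Suc i) = Node (Node (Node (next_spine l j i') (i'*l+j+1)
           (Node (rpath (i*l+j+2-l) (l-j-1)) (i*l+1) (Node (lpath (i*l+2) (j-2)) (i*l+j) Leaf))) (i*l+j+1)
           (Node (rpath (Suc (i*l+j+1)) (l-j-1)) (Suc i*l+1) (lpath (Suc i*l+2) (j-2)))) (Suc i*l+j) (spine l j (Suc (Suc i)))"
proof -
  have "gap l (Suc j) i = Node (rpath (i*l+j+2-l) (l-j-1)) (i*l+1) (Node (lpath (i*l+2) (j-2)) (i*l+j) Leaf)"
    using i lpath_extend[OF j, of "i*l+2"] by (simp add: gap_def numeral_2_eq_2)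
  moreover have "Suc i*l+j+2-l = Suc (i*l+j+1)" by simp
  ultimately show ?thesis unfolding grid_tree_def i done_part.simps next_spine.simps cut_gap_def
    by (simp add: add.assoc)
qed

lemma bst_step_row_0:
  assumes j: "2 \<le> j" "j < l"
  shows "bst_step (grid_tree l j 0) j (row_touched l j 0) (grid_tree l j 1)"
proof -
  have T: "row_touched l j 0 = {1, j, j+1, l+1, l+j}" by (auto simp: row_touched_def)
  show ?thesis
    unfolding grid_tree_0_unfold[OF j] grid_tree_1_unfold[OF j] T
    by (rule bst_step_five_nodes[OF refl])
       (use j in \<open>auto simp: set_lpath set_rpath set_spine\<close>)
qed

lemma bst_step_row:
  assumes j: "2 \<le> j" "j < l" and i: "i = Suc i'" "Suc i < l"
  shows "bst_step (grid_tree l j i) (i*l+j) (row_touched l j i) (grid_tree l j (Suc i))"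
proof -
  have T: "row_touched l j i = {i'*l+j+1, i*l+1, i*l+j, i*l+j+1, Suc i*l+1, Suc i*l+j}"
    by (simp add: row_touched_def i)
  have il: "i*l = l + i'*l" "Suc i * l = l + l + i'*l" "Suc (Suc i) \<le> l" using i by simp_all
  show ?thesis
    unfolding grid_tree_Suc_unfold[OF assms] grid_tree_Suc_Suc_unfold[OF j(1) i(1)] T
    by (rule bst_step_six_nodes[OF refl])
       (use j il in \<open>simp_all add: set_next_spine set_lpath set_rpath set_spine\<close>)
qed

lemma bst_step_middle_column:
  assumes j: "2 \<le> j" "j < l" and i: "Suc i < l"
  shows "bst_step (grid_tree l j i) (i*l+j) (row_touched l j i) (grid_tree l j (Suc i))"
  using bst_step_row_0[OF j] bst_step_row[OF j _ i] by (cases i) auto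

section \<open>Passing from one middle column to the next\<close>

definition column_end_touched :: "nat \<Rightarrow> nat \<Rightarrow> nat set" where
  "column_end_touched l j = (\<lambda>q. q*l+j+1) ` {..<l} \<union> {(l-1)*l+1, (l-1)*l+j}"

lemma column_end_touched_subset:
  assumes i: "Suc i = l" "i = Suc i'"
  shows "column_end_touched l j \<subseteq> {..i'*l+j+1} \<union> {i*l+1, i*l+j, i*l+j+1}"
proof
  fix x assume "x \<in> column_end_touched l j"
  then consider q where "q \<le> i'" "x = q*l+j+1" | "x = i*l+j+1" | "x = i*l+1" | "x = i*l+j"
    unfolding column_end_touched_def using i by (auto simp: less_Suc_eq_le le_Suc_eq)
  then show "x \<in> {..i'*l+j+1} \<union> {i*l+1, i*l+j, i*l+j+1}"
    by cases (auto simp: mult_le_mono1)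
qed

lemma gap_disjoint_column_end:
  assumes j: "2 \<le> j" "j < l" and k: "k < l - 1"
  shows "set_tree (gap l (Suc j) k) \<inter> column_end_touched l j = {}"
proof -
  have sub: "set_tree (gap l (Suc j) k) \<subseteq> {k*l+Suc j+1-l..<k*l+Suc j}" using j by (intro set_gap) auto
  have a: "k*l + l \<le> (l-1)*l" using less_imp_mult_add_le[OF k] .
  { fix q assume q: "q < l" "q*l+j+1 \<in> {k*l+Suc j+1-l..<k*l+Suc j}"
    have False
    proof (cases "q < k")
      case True then show ?thesis using less_imp_mult_add_le[OF True, of l] q by auto
    next
      case False then have "k*l \<le> q*l" by simp
      then show ?thesis using q by auto
    qed }
  moreover have "(l-1)*l+1 \<notin> {k*l+Suc j+1-l..<k*l+Suc j}" using a j by auto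
  moreover have "(l-1)*l+j \<notin> {k*l+Suc j+1-l..<k*l+Suc j}" using a j by auto
  ultimately show ?thesis using sub unfolding column_end_touched_def by blast
qed

lemma grid_tree_0_eq_spine: "0 < l \<Longrightarrow> grid_tree l j 0 = spine l j 0"
  by (simp add: grid_tree_def spine_less)

lemma grid_tree_last_row_unfold:
  assumes j: "2 \<le> j" "j < l" and i: "Suc i = l" "i = Suc i'"
  shows "grid_tree l j i = Node (Node (next_spine l j i') (i'*l+j+1)
           (Node (rpath (i*l+j+2-l) (l-j-1)) (i*l+1) (lpath (i*l+2) (j-2)))) (i*l+j)
           (Node Leaf (i*l+j+1) (rpath (Suc (i*l+j+1)) (l-j-1)))"
proof -
  have "l*l = i*l + l" using i(1) by auto
  then have "l*l+j+1-l = i*l+j+1" by simp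
  then have "spine l j (Suc i) = Node Leaf (i*l+j+1) (rpath (Suc (i*l+j+1)) (l-j-1))"
    using i(1) j by (simp add: spine_end rpath_pos)
  then show ?thesis unfolding grid_tree_def i(2) done_part.simps cut_gap_def by simp
qed

lemma next_column_spine_unfold:
  assumes j: "2 \<le> j" and i: "Suc i = l"
  shows "gap l (Suc j) i = Node (rpath (i*l+j+2-l) (l-j-1)) (i*l+1) (Node (lpath (i*l+2) (j-2)) (i*l+j) Leaf)"
    and "spine l (Suc j) (Suc i) = rpath (Suc (i*l+j+1)) (l-j-1)"
proof -
  show "gap l (Suc j) i = Node (rpath (i*l+j+2-l) (l-j-1)) (i*l+1) (Node (lpath (i*l+2) (j-2)) (i*l+j) Leaf)"
    using i lpath_extend[OF j, of "i*l+2"] by (simp add: gap_def numeral_2_eq_2)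
  have "l*l = i*l + l" using i by auto
  then have "l*l+Suc j+1-l = Suc (i*l+j+1)" by simp
  then show "spine l (Suc j) (Suc i) = rpath (Suc (i*l+j+1)) (l-j-1)"
    using i by (simp add: spine_end)
qed

lemma bst_step_column_end:
  assumes j: "2 \<le> j" "j < l"
  shows "bst_step (grid_tree l j (l-1)) ((l-1)*l+j) (column_end_touched l j) (grid_tree l (Suc j) 0)"
proof -
  define T where "T = column_end_touched l j"
  define i where "i = l - 1"
  define i' where "i' = l - 2"
  have i: "Suc i = l" "i = Suc i'" unfolding i_def i'_def using j by auto
  have il: "i*l = l + i'*l" "l*l = i*l + l" using i by auto
  have sub: "T \<subseteq> {..i'*l+j+1} \<union> {i*l+1, i*l+j, i*l+j+1}"
    unfolding T_def using column_end_touched_subset[OF i] .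
  have mem: "q*l+j+1 \<in> T" if "q < l" for q unfolding T_def column_end_touched_def using that by auto
  have mem_last: "i*l+1 \<in> T" "i*l+j \<in> T" unfolding T_def column_end_touched_def i_def by auto
  have gaps: "set_tree (gap l (Suc j) k) \<inter> T = {}" if "k < i" for k
    unfolding T_def by (rule gap_disjoint_column_end) (use j that i_def in auto)
  have paths: "set_tree (rpath (i*l+j+2-l) (l-j-1)) \<inter> T = {}" "set_tree (lpath (i*l+2) (j-2)) \<inter> T = {}"
    "set_tree (rpath (Suc (i*l+j+1)) (l-j-1)) \<inter> T = {}"
    using sub j il by (auto simp: set_rpath set_lpath)
  have old: "top_set T (next_spine l j i') \<and> hang T (next_spine l j i') = gap l (Suc j) ` {..i'}"
    by (rule next_spine_top_set_hang) (use mem gaps i in auto)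
  have new: "top_set T (spine l (Suc j) 0) = (top_set T (gap l (Suc j) i) \<and> top_set T (spine l (Suc j) (Suc i))) \<and>
      hang T (spine l (Suc j) 0) = gap l (Suc j) ` {0..<i} \<union> hang T (gap l (Suc j) i) \<union> hang T (spine l (Suc j) (Suc i))"
    by (rule spine_top_set_hang) (use mem gaps i in auto)
  have "{..i'} = {0..<i}" using i by auto
  then have tops: "top_set T (grid_tree l j i) \<and> top_set T (grid_tree l (Suc j) 0)
      \<and> hang T (grid_tree l (Suc j) 0) = hang T (grid_tree l j i)"
    using old new paths mem[of i'] mem[of i] mem_last i
    unfolding grid_tree_last_row_unfold[OF j i] grid_tree_0_eq_spine[of l, OF zero_less_Suc[of i, unfolded i(1)]]
      next_column_spine_unfold[OF j(1) i(1)]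
    by (auto simp: top_set_if_disjoint hang_if_disjoint)
  have "T \<subseteq> {1..<l*l+1}"
  proof
    fix x assume x: "x \<in> T"
    then have "x \<noteq> 0" unfolding T_def column_end_touched_def using j by auto
    moreover have "x \<le> i*l+j+1" using sub x il by auto
    ultimately show "x \<in> {1..<l*l+1}" using j il by auto
  qed
  then show ?thesis
    unfolding T_def[symmetric] i_def[symmetric]
    by (intro bst_stepI) (use tops mem_last j i in \<open>simp_all add: set_grid_tree set_grid_tree_0 inorder_grid_tree inorder_grid_tree_0\<close>)
qed

section \<open>The first and the last column\<close>

lemma spine_key_notin_gap:
  assumes j: "2 \<le> j" "j \<le> l" and k: "k < i" and q: "q \<le> i"
  shows "q*l+j \<notin> set_tree (gap l j k)"
proof -
  have sub: "set_tree (gap l j k) \<subseteq> {k*l+j+1-l..<k*l+j}" using set_gap j by blast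
  show ?thesis
  proof (cases "q < k")
    case True then have "q*l+l \<le> k*l" using less_imp_mult_add_le by blast
    then have "q*l+j \<notin> {k*l+j+1-l..<k*l+j}" by (simp only: atLeastLessThan_iff) arith
    then show ?thesis using sub by blast
  next
    case False then have "k*l \<le> q*l" by (intro mult_le_mono1) simp
    then show ?thesis using sub by auto
  qed
qed

lemma bst_step_spine_prefix:
  assumes j: "2 \<le> j" "j \<le> l" and i: "i < l" and x: "x \<in> T"
    and spine_keys: "(\<lambda>q. q*l+j) ` {..i} \<subseteq> T"
    and T: "T \<subseteq> (\<lambda>q. q*l+j) ` {..i} \<union> {i*l+1..i*l+j}"
    and top: "top_set T (gap l j i)"
  shows "bst_step (grid_tree l j 0) x T (grid_tree l j 0)"
proof -
  have il: "i*l + l \<le> l*l" using less_imp_mult_add_le[OF i] .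
  have bound: "1 \<le> y \<and> y \<le> i*l+j" if "y \<in> T" for y
    using T that j by (auto simp: mult_le_mono1)
  have gaps: "set_tree (gap l j k) \<inter> T = {}" if k: "k < i" for k
  proof -
    have "y \<notin> set_tree (gap l j k)" if "y \<in> {i*l+1..i*l+j}" for y
    proof -
      have "k*l+l \<le> i*l" using less_imp_mult_add_le k by blast
      moreover have "set_tree (gap l j k) \<subseteq> {k*l+j+1-l..<k*l+j}" using set_gap j by blast
      ultimately show ?thesis using that j by auto
    qed
    then show ?thesis using T spine_key_notin_gap[OF j k] by blast
  qed
  have rest: "set_tree (spine l j (Suc i)) \<inter> T = {}"
    using bound set_spine[of j l "Suc i"] j i by fastforce
  have "top_set T (spine l j 0)"
    using spine_top_set_hang[of 0 i l j T] i gaps spine_keys top top_set_if_disjoint[OF rest] by auto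
  moreover have "T \<subseteq> set_tree (grid_tree l j 0)"
    using bound il j by (fastforce simp: set_grid_tree_0)
  ultimately show ?thesis
    using x i by (intro bst_step_refl) (auto simp: grid_tree_0_eq_spine)
qed

definition first_column_touched :: "nat \<Rightarrow> nat \<Rightarrow> nat set" where
  "first_column_touched l i = insert (i*l+1) ((\<lambda>q. q*l+2) ` {..i})"

lemma bst_step_first_column:
  assumes l: "2 \<le> l" and i: "i < l"
  shows "bst_step (grid_tree l 2 0) (i*l+1) (first_column_touched l i) (grid_tree l 2 0)"
proof (rule bst_step_spine_prefix[OF order.refl l i])
  define T where "T = first_column_touched l i"
  have "set_tree (rpath (i*l+2+1-l) (if i=0 then 0 else l-2)) \<inter> T = {}"
  proof (cases "i = 0")
    case False
    then have "l \<le> i*l" by simp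
    have "q*l+2 \<notin> {i*l+2+1-l..<i*l+2+1-l+(l-2)}" if "q \<le> i" for q
    proof (cases "q < i")
      case True then have "q*l+l \<le> i*l" using less_imp_mult_add_le by blast
      then show ?thesis using l by auto
    next
      case False then have "q = i" using that by simp
      then show ?thesis using \<open>l \<le> i*l\<close> l by (simp only: atLeastLessThan_iff) linarith
    qed
    moreover have "i*l+1 \<notin> {i*l+2+1-l..<i*l+2+1-l+(l-2)}"
      using \<open>l \<le> i*l\<close> l by (simp only: atLeastLessThan_iff) linarith
    ultimately show ?thesis unfolding set_rpath if_not_P[OF False] T_def first_column_touched_def by blast
  qed simp
  then show "top_set (first_column_touched l i) (gap l 2 i)"
    unfolding gap_def T_def by (simp add: top_set_if_disjoint first_column_touched_def)
qed (auto simp: first_column_touched_def)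

definition last_column_touched :: "nat \<Rightarrow> nat \<Rightarrow> nat set" where
  "last_column_touched l i = (\<lambda>q. q*l+l) ` {..i}"

lemma bst_step_last_column:
  assumes l: "2 \<le> l" and i: "i < l"
  shows "bst_step (grid_tree l l 0) (i*l+l) (last_column_touched l i) (grid_tree l l 0)"
proof (rule bst_step_spine_prefix[OF l order.refl i])
  have "set_tree (gap l l i) \<inter> last_column_touched l i = {}"
  proof -
    have "q*l+l \<notin> set_tree (gap l l i)" if "q \<le> i" for q
    proof -
      have "q*l+l \<notin> {i*l+l+1-l..<i*l+l}"
        using that less_imp_mult_add_le[of q i l] by (cases "q < i") auto
      then show ?thesis using set_gap[OF l order.refl, of i] by blast
    qed
    then show ?thesis unfolding last_column_touched_def by auto
  qed
  then show "top_set (last_column_touched l i) (gap l l i)" by (rule top_set_if_disjoint)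
qed (auto simp: last_column_touched_def)

section \<open>The execution and its cost\<close>

text \<open>Here \<open>c\<close> counts columns from \<open>0\<close>: the access in row \<open>i\<close> of column \<open>c + 1\<close>.\<close>
definition sched_tree :: "nat \<Rightarrow> nat \<Rightarrow> nat \<Rightarrow> nat tree" where
  "sched_tree l c i =
     (if c = 0 then grid_tree l 2 0 else if Suc c < l then grid_tree l (Suc c) i else grid_tree l l 0)"

definition sched_touched :: "nat \<Rightarrow> nat \<Rightarrow> nat \<Rightarrow> nat set" where
  "sched_touched l c i =
     (if c = 0 then first_column_touched l i
      else if Suc c < l then (if Suc i < l then row_touched l (Suc c) i else column_end_touched l (Suc c))
      else last_column_touched l i)"

lemma bst_step_sched:
  assumes l: "2 \<le> l" and c: "c < l" and i: "i < l"
  shows "bst_step (sched_tree l c i) (i*l+c+1) (sched_touched l c i)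
     (if Suc i < l then sched_tree l c (Suc i) else sched_tree l (Suc c) 0)"
proof -
  consider (first) "c = 0" | (middle) "c \<noteq> 0" "Suc c < l" | (last) "c \<noteq> 0" "Suc c = l"
    using c by linarith
  then show ?thesis
  proof cases
    case first
    then have "sched_tree l (Suc c) 0 = grid_tree l 2 0"
      using l by (auto simp: sched_tree_def numeral_2_eq_2)
    then show ?thesis using bst_step_first_column[OF l i] first by (simp add: sched_tree_def sched_touched_def)
  next
    case middle
    have j: "2 \<le> Suc c" "Suc c < l" using middle by auto
    show ?thesis
    proof (cases "Suc i < l")
      case True
      then show ?thesis using bst_step_middle_column[OF j True] middle
        by (simp add: sched_tree_def sched_touched_def add.assoc)
    next
      case False
      then have "i = l - 1" using i by simp
      moreover have "sched_tree l (Suc c) 0 = grid_tree l (Suc (Suc c)) 0"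
        using j by (cases "Suc (Suc c) = l") (auto simp: sched_tree_def)
      ultimately show ?thesis using bst_step_column_end[OF j] middle False
        by (simp add: sched_tree_def sched_touched_def add.assoc)
    qed
  next
    case last
    then have "sched_tree l c i = grid_tree l l 0" "sched_tree l c (Suc i) = grid_tree l l 0"
      "sched_tree l (Suc c) 0 = grid_tree l l 0" "sched_touched l c i = last_column_touched l i"
      "i*l+c+1 = i*l+l"
      by (simp_all add: sched_tree_def sched_touched_def)
    then show ?thesis using bst_step_last_column[OF l i] by (simp only: if_cancel)
  qed
qed

definition exec_tree :: "nat \<Rightarrow> nat \<Rightarrow> nat tree" where
  "exec_tree l k = sched_tree l (k div l) (k mod l)"

definition exec_touched :: "nat \<Rightarrow> nat \<Rightarrow> nat set" where
  "exec_touched l k = sched_touched l (k div l) (k mod l)"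

lemma exec_tree_Suc:
  assumes "0 < l"
  shows "exec_tree l (Suc k) =
    (if Suc (k mod l) < l then sched_tree l (k div l) (Suc (k mod l)) else sched_tree l (Suc (k div l)) 0)"
proof (cases "Suc (k mod l) < l")
  case True
  then show ?thesis by (simp add: exec_tree_def mod_Suc div_Suc)
next
  case False
  then have "Suc (k mod l) = l" using mod_less_divisor[OF assms, of k] by simp
  then show ?thesis by (simp add: exec_tree_def mod_Suc div_Suc)
qed

lemma bst_execution_tilted:
  assumes l: "2 \<le> l"
  shows "bst_execution (l*l) (tilted_seq l) (map (exec_tree l) [0..<l*l+1]) (map (exec_touched l) [0..<l*l])"
  unfolding bst_execution_def
proof (intro conjI allI impI)
  show "length (map (exec_tree l) [0..<l*l+1]) = length (tilted_seq l) + 1"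
    and "length (map (exec_touched l) [0..<l*l]) = length (tilted_seq l)"
    by (simp_all add: tilted_seq_eq)
  show "inorder (map (exec_tree l) [0..<l*l+1] ! 0) = [1..<l*l+1]"
    using l by (simp add: exec_tree_def sched_tree_def inorder_grid_tree_0 del: upt_Suc)
  fix k assume "k < length (tilted_seq l)"
  then have k: "k < l*l" by (simp add: tilted_seq_eq)
  have "k div l < l" "k mod l < l" using k l by (simp_all add: less_mult_imp_div_less)
  then have "bst_step (exec_tree l k) (k mod l * l + k div l + 1) (exec_touched l k) (exec_tree l (Suc k))"
    using bst_step_sched[OF l] l unfolding exec_tree_Suc[OF order.strict_trans2[OF pos2 l]]
    by (simp add: exec_tree_def exec_touched_def)
  then show "bst_step (map (exec_tree l) [0..<l*l+1] ! k) (tilted_seq l ! k) (map (exec_touched l) [0..<l*l] ! k)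
     (map (exec_tree l) [0..<l*l+1] ! Suc k)"
    using k by (simp add: tilted_seq_eq nth_append del: upt_Suc)
qed

lemma card_row_touched: "card (row_touched l j i) \<le> 6"
  using card_length[of "[(i-1)*l+j+1, i*l+1, i*l+j, i*l+j+1, Suc i*l+1, Suc i*l+j]"]
  by (simp add: row_touched_def)

lemma card_column_end_touched: "card (column_end_touched l j) \<le> l+2"
proof -
  have "card ((\<lambda>q. q*l+j+1) ` {..<l}) \<le> l" using card_image_le[of "{..<l}"] by simp
  moreover have "card {(l-1)*l+1, (l-1)*l+j} \<le> 2" by (simp add: card_insert_if)
  ultimately show ?thesis unfolding column_end_touched_def
    using card_Un_le[of "(\<lambda>q. q*l+j+1) ` {..<l}" "{(l-1)*l+1, (l-1)*l+j}"] by linarith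
qed

lemma card_sched_touched:
  assumes c: "c < l" and i: "i < l"
  shows "card (sched_touched l c i) \<le>
    6 + (if Suc i = l then l+2 else 0) + (if c = 0 then l+2 else 0) + (if Suc c = l then l+2 else 0)"
proof -
  have spine: "card (f ` {..i}) \<le> l" for f :: "nat \<Rightarrow> nat"
    using card_image_le[of "{..i}" f] i by simp
  have "card (first_column_touched l i) \<le> l+1"
    unfolding first_column_touched_def using spine[of "\<lambda>q. q*l+2"] by (simp add: card_insert_if)
  moreover have "card (last_column_touched l i) \<le> l"
    unfolding last_column_touched_def by (rule spine)
  ultimately show ?thesis using card_row_touched[of l "Suc c" i] card_column_end_touched[of l "Suc c"] c i
    by (auto simp: sched_touched_def)
qed

lemma sum_if_Suc_eq: "(\<Sum>i<l. if Suc i = l then a else 0) = (if 0 < l then a else (0::nat))"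
  by (induction l) auto

lemma sum_if_eq_0: "(\<Sum>i<(l::nat). if i = 0 then a else 0) = (if 0 < l then a else (0::nat))"
  by (induction l) auto

lemma sum_lessThan_mult: "(\<Sum>k<m*l. f k) = (\<Sum>c<m. \<Sum>i<l. f (c*l+i::nat))"
proof (induction m)
  case (Suc m)
  have "(\<Sum>k<Suc m*l. f k) = (\<Sum>k<m*l. f k) + (\<Sum>k\<in>{m*l..<m*l+l}. f k)"
    by (simp add: lessThan_atLeast0 sum.atLeastLessThan_concat add.commute)
  also have "(\<Sum>k\<in>{m*l..<m*l+l}. f k) = (\<Sum>i<l. f (m*l+i))"
    using sum.shift_bounds_nat_ivl[of f 0 "m*l" l] by (simp add: lessThan_atLeast0 add.commute)
  finally show ?case using Suc by simp
qed simp

lemma exec_cost_tilted: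
  assumes l: "2 \<le> l"
  shows "exec_cost (map (exec_touched l) [0..<l*l]) \<le> 12 * (l*l)"
proof -
  define A where "A i = (if Suc i = l then l+2 else 0)" for i
  define B where "B c = (if c = 0 then l+2 else 0) + (if Suc c = l then l+2 else 0)" for c
  have sum_A: "(\<Sum>i<l. A i) = l+2" and sum_B: "(\<Sum>c<l. B c) = 2*(l+2)"
    using l by (simp_all add: A_def B_def sum.distrib sum_if_Suc_eq sum_if_eq_0)
  have "exec_cost (map (exec_touched l) [0..<l*l]) = (\<Sum>k<l*l. card (exec_touched l k))"
    unfolding exec_cost_def map_map comp_def
    by (simp add: sum_set_upt_conv_sum_list_nat[symmetric] lessThan_atLeast0)
  also have "\<dots> = (\<Sum>c<l. \<Sum>i<l. card (sched_touched l c i))"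
    by (simp add: sum_lessThan_mult exec_touched_def)
  also have "\<dots> \<le> (\<Sum>c<l. \<Sum>i<l. 6 + A i + B c)"
    using card_sched_touched by (intro sum_mono) (simp add: A_def B_def add.assoc)
  also have "\<dots> = (\<Sum>c<l. (6*l + (l+2)) + l * B c)"
    by (simp add: sum.distrib sum_A)
  also have "\<dots> = l*(6*l + (l+2)) + l*(2*(l+2))"
    by (simp only: sum.distrib sum_B flip: sum_distrib_left) simp
  also have "\<dots> \<le> 12 * (l*l)"
    using l by (simp add: algebra_simps)
  finally show ?thesis .
qed

lemma OPT_le_exec_cost: "bst_execution n S ts Ts \<Longrightarrow> OPT n S \<le> exec_cost Ts"
  unfolding OPT_def by (rule Least_le) blast

lemma OPT_tilted_seq_le: "OPT (l*l) (tilted_seq l) \<le> 12 * (l*l)"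
proof -
  consider "l = 0" | "l = 1" | "2 \<le> l" by linarith
  then show ?thesis
  proof cases
    case 1
    have "bst_execution 0 [] [Leaf] []" by (simp add: bst_execution_def)
    then show ?thesis using 1 OPT_le_exec_cost by (fastforce simp: tilted_seq_eq exec_cost_def)
  next
    case 2
    have "bst_step (Node Leaf 1 Leaf) 1 {1} (Node Leaf 1 Leaf)" by (rule bst_step_refl) auto
    then have "bst_execution 1 [1] [Node Leaf 1 Leaf, Node Leaf 1 Leaf] [{1}]"
      by (simp add: bst_execution_def)
    then show ?thesis using 2 OPT_le_exec_cost by (fastforce simp: tilted_seq_eq exec_cost_def)
  next
    case 3
    then show ?thesis using OPT_le_exec_cost[OF bst_execution_tilted] exec_cost_tilted order_trans by blast
  qed
qed

theorem mainTheorem11: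
  shows "\<exists>c::real. \<forall>l::nat. real (OPT (l^2) (tilted_seq l)) \<le> c * real (l^2)"
proof (intro exI allI)
  fix l :: nat
  have "real (OPT (l^2) (tilted_seq l)) \<le> real (12 * l^2)"
    using OPT_tilted_seq_le[of l] unfolding of_nat_le_iff power2_eq_square .
  then show "real (OPT (l^2) (tilted_seq l)) \<le> 12 * real (l^2)" by simp
qed

end
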